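(* Let $f(z)=z+\sum_{n\ge2}a_nz^n$ belong to $\Omega$. Then for every $\mu\in\mathbb{C}$, $$|a_3-\mu a_2^2|\le \tfrac14\max\{1,|\mu|\},$$ and the inequality is sharp.
   Context: $\Delta=\{z\in\mathbb{C}:|z|<1\}$. $\mathcal{A}$ is the class of functions $f$ analytic in $\Delta$ with $f(0)=0$, $f'(0)=1$. $\Omega$ is the class of $f\in\mathcal{A}$ with $|zf'(z)-f(z)|<\tfrac12$ for all $z\in\Delta$. *)

theory Defs
  imports "HOL-Complex_Analysis.Complex_Analysis"
begin

definition classA :: "(complex \<Rightarrow> complex) set" where
  "classA = {f. f holomorphic_on ball 0 1 \<and> f 0 = 0 \<and> deriv f 0 = 1}"

definition classOmega :: "(complex \<Rightarrow> complex) set" where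
  "classOmega = {f \<in> classA. \<forall>z\<in>ball 0 1. cmod (z * deriv f z - f z) < 1/2}"

definition tcoeff :: "(complex \<Rightarrow> complex) \<Rightarrow> nat \<Rightarrow> complex" where
  "tcoeff f n = (deriv ^^ n) f 0 / of_nat (fact n)"

end

theory Submission
  imports Defs
begin

text \<open>For \<open>f \<in> \<Omega>\<close> the function \<open>h = 2 (z f' - f)\<close>, whose Taylor coefficients are \<open>2 (n - 1) a\<^sub>n\<close>,
  maps the unit disc into itself and vanishes to second order at 0. Applying the Schwarz lemma twice
  gives \<open>h = z\<^sup>2 \<phi>\<close> with \<open>|\<phi>| \<le> 1\<close>, so \<open>\<phi>(0) = 2 a\<^sub>2\<close> and \<open>\<phi>'(0) = 4 a\<^sub>3\<close>. The Schwarz-Pick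
  inequality \<open>|\<phi>'(0)| \<le> 1 - |\<phi>(0)|\<^sup>2\<close> then yields \<open>4 |a\<^sub>3 - \<mu> a\<^sub>2\<^sup>2| \<le> (1 - t) + |\<mu>| t\<close> with
  \<open>t = |\<phi>(0)|\<^sup>2 \<in> [0,1]\<close>. Equality is attained by \<open>z + z\<^sup>3/4\<close> when \<open>|\<mu>| \<le> 1\<close> and by \<open>z + z\<^sup>2/2\<close>
  otherwise.\<close>

lemma higher_deriv_power_0:
  "(deriv ^^ j) (\<lambda>w. w ^ k) (0::complex) = (if j = k then fact k else 0)"
proof -
  have "(deriv ^^ j) (\<lambda>w. (w - 0) ^ k) (0::complex) = pochhammer (of_nat (Suc k - j)) j * (0 - 0) ^ (k - j)"
    by (rule higher_deriv_power)
  moreover have "j = k \<or> j < k \<or> k < j" by auto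
  ultimately show ?thesis
    by (auto simp: pochhammer_fact pochhammer_0_left)
qed

lemma tcoeff_0 [simp]: "tcoeff f 0 = f 0"
  and tcoeff_1 [simp]: "tcoeff f 1 = deriv f 0"
  by (simp_all add: tcoeff_def)

lemma tcoeff_power: "tcoeff (\<lambda>w. w ^ k) n = (if n = k then 1 else 0)"
  by (simp add: tcoeff_def higher_deriv_power_0)

lemma tcoeff_cong_ev:
  assumes "eventually (\<lambda>z. f z = g z) (nhds 0)"
  shows "tcoeff f n = tcoeff g n"
  unfolding tcoeff_def using higher_deriv_cong_ev[OF assms refl] by simp

context
  fixes S :: "complex set"
  assumes S: "open S" "0 \<in> S"
begin

lemma tcoeff_add:
  assumes "f holomorphic_on S" "g holomorphic_on S"
  shows "tcoeff (\<lambda>z. f z + g z) n = tcoeff f n + tcoeff g n"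
  unfolding tcoeff_def higher_deriv_add[OF assms S] by (simp add: add_divide_distrib)

lemma tcoeff_diff:
  assumes "f holomorphic_on S" "g holomorphic_on S"
  shows "tcoeff (\<lambda>z. f z - g z) n = tcoeff f n - tcoeff g n"
  unfolding tcoeff_def higher_deriv_diff[OF assms S] by (simp add: diff_divide_distrib)

lemma tcoeff_cmult:
  assumes "f holomorphic_on S"
  shows "tcoeff (\<lambda>z. c * f z) n = c * tcoeff f n"
  unfolding tcoeff_def higher_deriv_cmult[OF assms S(2,1)] by simp

lemma tcoeff_mult_power:
  assumes "\<phi> holomorphic_on S"
  shows "tcoeff (\<lambda>w. w ^ k * \<phi> w) (n + k) = tcoeff \<phi> n"
proof -
  have "(deriv ^^ (n + k)) (\<lambda>w. w ^ k * \<phi> w) 0 =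
        (\<Sum>i = 0..n + k. of_nat (n + k choose i) * (deriv ^^ i) (\<lambda>w. w ^ k) 0 * (deriv ^^ (n + k - i)) \<phi> 0)"
    by (rule higher_deriv_mult[OF _ assms S]) (auto intro!: holomorphic_intros)
  also have "\<dots> = (\<Sum>i = 0..n + k. if i = k then of_nat (n + k choose k) * fact k * (deriv ^^ n) \<phi> 0 else 0)"
    by (rule sum.cong) (auto simp: higher_deriv_power_0)
  also have "\<dots> = of_nat (n + k choose k) * fact k * (deriv ^^ n) \<phi> 0"
    by simp
  finally show ?thesis
    by (simp add: tcoeff_def binomial_fact field_simps)
qed

lemma tcoeff_z_deriv:
  assumes "f holomorphic_on S"
  shows "tcoeff (\<lambda>z. z * deriv f z) n = of_nat n * tcoeff f n"
proof (cases n)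
  case (Suc m)
  have "deriv f holomorphic_on S"
    using assms S(1) by (rule holomorphic_deriv)
  then have "(deriv ^^ n) (\<lambda>z. z * deriv f z) 0 =
        (\<Sum>i = 0..n. of_nat (n choose i) * (deriv ^^ i) (\<lambda>z. z) 0 * (deriv ^^ (n - i)) (deriv f) 0)"
    by (rule higher_deriv_mult[OF _ _ S, rotated]) (auto intro!: holomorphic_intros)
  also have "\<dots> = (\<Sum>i = 0..n. if i = 1 then of_nat n * (deriv ^^ m) (deriv f) 0 else 0)"
    by (rule sum.cong) (auto simp: Suc)
  also have "\<dots> = of_nat n * (deriv ^^ m) (deriv f) 0"
    using Suc by simp
  also have "(deriv ^^ m) (deriv f) = (deriv ^^ n) f"
    using Suc by (simp only: funpow_Suc_right o_def)
  finally show ?thesis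
    by (simp add: tcoeff_def)
qed simp

lemma tcoeff_z_deriv_minus:
  assumes "f holomorphic_on S"
  shows "tcoeff (\<lambda>z. z * deriv f z - f z) n = (of_nat n - 1) * tcoeff f n"
proof -
  have "(\<lambda>z. z * deriv f z) holomorphic_on S"
    using holomorphic_deriv[OF assms S(1)] by (auto intro!: holomorphic_intros)
  then show ?thesis
    using tcoeff_diff[OF _ assms] tcoeff_z_deriv[OF assms] by (simp add: algebra_simps)
qed

end

lemma unit_disc_map_constant_if_norm_1:
  assumes hol: "\<phi> holomorphic_on ball 0 1" and le: "\<And>z. z \<in> ball 0 1 \<Longrightarrow> cmod (\<phi> z) \<le> 1"
    and z0: "z0 \<in> ball 0 1" "cmod (\<phi> z0) = 1"
  shows "\<forall>z\<in>ball 0 1. \<phi> z = \<phi> z0"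
proof -
  have "\<phi> constant_on ball 0 1"
  proof (rule Schwarz2[OF hol, of "1 - norm z0" z0])
    show "0 < 1 - cmod z0" using z0 by auto
    show "ball z0 (1 - cmod z0) \<subseteq> ball 0 1" by (simp add: ball_subset_ball_iff)
    show "cmod (\<phi> z) \<le> cmod (\<phi> z0)" if "cmod (z0 - z) < 1 - cmod z0" for z
    proof -
      have "norm z < 1" using that norm_triangle_ineq2[of z z0] by (simp add: norm_minus_commute)
      then show ?thesis using le z0 by auto
    qed
  qed
  with z0 show ?thesis by (auto simp: constant_on_def)
qed

lemma Schwarz_factor:
  assumes hol: "h holomorphic_on ball 0 1" and lt: "\<And>z. z \<in> ball 0 1 \<Longrightarrow> cmod (h z) < 1"
    and h0: "h 0 = 0"
  obtains k where "k holomorphic_on ball 0 1" "\<And>z. z \<in> ball 0 1 \<Longrightarrow> cmod (k z) \<le> 1"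
    "\<And>z. z \<in> ball 0 1 \<Longrightarrow> h z = z * k z" "k 0 = deriv h 0"
proof -
  obtain k where holk: "k holomorphic_on ball 0 1" and hk: "\<And>z. norm z < 1 \<Longrightarrow> h z = z * k z"
     and k0: "deriv h 0 = k 0"
    by (rule Schwarz3[OF hol h0]) blast
  have lt': "\<And>z. norm z < 1 \<Longrightarrow> norm (h z) < 1" using lt by auto
  have "cmod (k z) \<le> 1" if "z \<in> ball 0 1" for z
  proof (cases "z = 0")
    case True then show ?thesis using Schwarz_Lemma(2)[OF hol h0 lt' that[simplified]] k0 by simp
  next
    case False
    have "norm z * norm (k z) \<le> norm z * 1"
      using Schwarz_Lemma(1)[OF hol h0 lt', of z] hk[of z] that by (simp add: norm_mult)
    then show ?thesis using False by simp
  qed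
  with that holk hk k0 show ?thesis by auto
qed

lemma Schwarz_factor_double_zero:
  assumes hol: "h holomorphic_on ball 0 1" and lt: "\<And>z. z \<in> ball 0 1 \<Longrightarrow> cmod (h z) < 1"
    and h0: "h 0 = 0" and dh0: "deriv h 0 = 0"
  obtains \<phi> where "\<phi> holomorphic_on ball 0 1" "\<And>z. z \<in> ball 0 1 \<Longrightarrow> cmod (\<phi> z) \<le> 1"
    "\<And>z. z \<in> ball 0 1 \<Longrightarrow> h z = z ^ 2 * \<phi> z"
proof -
  obtain k where holk: "k holomorphic_on ball 0 1" and kle: "\<And>z. z \<in> ball 0 1 \<Longrightarrow> cmod (k z) \<le> 1"
    and hk: "\<And>z. z \<in> ball 0 1 \<Longrightarrow> h z = z * k z" and "k 0 = deriv h 0"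
    using Schwarz_factor[OF hol lt h0] by metis
  with dh0 have k0: "k 0 = 0" by simp
  have klt: "cmod (k z) < 1" if "z \<in> ball 0 1" for z
  proof (rule ccontr)
    assume "\<not> cmod (k z) < 1"
    with kle[OF that] have "cmod (k z) = 1" by simp
    with unit_disc_map_constant_if_norm_1[OF holk kle that] k0 show False by auto
  qed
  obtain \<phi> where "\<phi> holomorphic_on ball 0 1" "\<And>z. z \<in> ball 0 1 \<Longrightarrow> cmod (\<phi> z) \<le> 1"
    and k\<phi>: "\<And>z. z \<in> ball 0 1 \<Longrightarrow> k z = z * \<phi> z"
    using Schwarz_factor[OF holk klt k0] by metis
  with that show ?thesis using hk by (simp add: power2_eq_square)
qed

lemma Moebius_function_comp_has_field_derivative:
  assumes d: "(\<phi> has_field_derivative d) (at z)" and w: "cmod (\<phi> z) < 1"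
  shows "((\<lambda>x. Moebius_function 0 (\<phi> z) (\<phi> x)) has_field_derivative d / (1 - cmod (\<phi> z) ^ 2)) (at z)"
proof -
  define w where "w = \<phi> z"
  have "cnj w * w = of_real (cmod w ^ 2)"
    by (metis complex_norm_square mult.commute of_real_power)
  then have ww: "1 - cnj w * w = of_real (1 - cmod w ^ 2)"
    by simp
  have "cmod w ^ 2 < 1"
    using w by (simp add: w_def abs_square_less_1)
  then have nz: "1 - cnj w * w \<noteq> 0"
    unfolding ww of_real_eq_0_iff by linarith
  show ?thesis
    unfolding Moebius_function_simple w_def[symmetric] ww[symmetric]
  proof (rule DERIV_cong)
    show "((\<lambda>x. (\<phi> x - w) / (1 - cnj w * \<phi> x)) has_field_derivative
        (d * (1 - cnj w * \<phi> z) - (\<phi> z - w) * (- (cnj w * d))) / ((1 - cnj w * \<phi> z) * (1 - cnj w * \<phi> z))) (at z)"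
      using nz d unfolding w_def by (intro DERIV_divide derivative_eq_intros refl) auto
    show "(d * (1 - cnj w * \<phi> z) - (\<phi> z - w) * (- (cnj w * d))) / ((1 - cnj w * \<phi> z) * (1 - cnj w * \<phi> z))
        = d / (1 - cnj w * w)"
      using nz by (simp add: w_def)
  qed
qed

lemma Schwarz_Pick_at_0:
  assumes hol: "\<phi> holomorphic_on ball 0 1" and le: "\<And>z. z \<in> ball 0 1 \<Longrightarrow> cmod (\<phi> z) \<le> 1"
  shows "cmod (deriv \<phi> 0) \<le> 1 - cmod (\<phi> 0) ^ 2"
proof (cases "\<exists>z\<in>ball 0 1. cmod (\<phi> z) = 1")
  case True
  then obtain z0 where z0: "z0 \<in> ball 0 1" "cmod (\<phi> z0) = 1" by auto
  have c: "\<forall>z\<in>ball 0 1. \<phi> z = \<phi> z0"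
    by (rule unit_disc_map_constant_if_norm_1[OF hol le z0])
  have "eventually (\<lambda>z. z \<in> ball 0 1) (nhds (0::complex))"
    by (intro eventually_nhds_in_open) auto
  then have "eventually (\<lambda>z. \<phi> z = \<phi> z0) (nhds 0)"
    by (rule eventually_mono) (use c in blast)
  then have "deriv \<phi> 0 = 0"
    using deriv_cong_ev[of \<phi> "\<lambda>_. \<phi> z0" 0 0] by simp
  moreover have "\<phi> 0 = \<phi> z0"
    using bspec[OF c, of 0] by simp
  ultimately show ?thesis
    using z0 by simp
next
  case False
  then have lt: "cmod (\<phi> z) < 1" if "z \<in> ball 0 1" for z
    using le[OF that] False that by (auto simp: order_le_less)
  have lt0: "cmod (\<phi> 0) < 1"
    using lt by simp
  define M where "M = (\<lambda>z. Moebius_function 0 (\<phi> 0) (\<phi> z))"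
  have "(Moebius_function 0 (\<phi> 0) \<circ> \<phi>) holomorphic_on ball 0 1"
    by (rule holomorphic_on_compose_gen[OF hol Moebius_function_holomorphic[OF lt0]]) (use lt in auto)
  then have holM: "M holomorphic_on ball 0 1"
    by (simp add: M_def o_def)
  have "(M has_field_derivative deriv \<phi> 0 / (1 - cmod (\<phi> 0) ^ 2)) (at 0)"
    unfolding M_def by (rule Moebius_function_comp_has_field_derivative[OF holomorphic_derivI[OF hol] lt0]) auto
  then have dM: "deriv M 0 = deriv \<phi> 0 / (1 - cmod (\<phi> 0) ^ 2)"
    by (rule DERIV_imp_deriv)
  have "M 0 = 0"
    by (simp add: M_def Moebius_function_eq_zero)
  moreover have "cmod (M z) < 1" if "cmod z < 1" for z
    unfolding M_def using lt that by (simp add: Moebius_function_norm_lt_1 lt0)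
  ultimately have "norm (deriv M 0) \<le> 1"
    using Schwarz_Lemma(2)[OF holM, of 0] by simp
  moreover have pos: "0 < 1 - cmod (\<phi> 0) ^ 2"
    using lt0 by (simp add: abs_square_less_1)
  moreover have "norm (deriv M 0) = cmod (deriv \<phi> 0) / (1 - cmod (\<phi> 0) ^ 2)"
    unfolding dM norm_divide norm_of_real using pos by simp
  ultimately show ?thesis
    by (simp add: divide_le_eq)
qed

lemma Fekete_Szegoe_unit_disc_map:
  assumes hol: "\<phi> holomorphic_on ball 0 1" and le: "\<And>z. z \<in> ball 0 1 \<Longrightarrow> cmod (\<phi> z) \<le> 1"
  shows "cmod (deriv \<phi> 0 - \<mu> * \<phi> 0 ^ 2) \<le> max 1 (cmod \<mu>)"
proof -
  define t where "t = cmod (\<phi> 0) ^ 2"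
  have t: "0 \<le> t" "t \<le> 1"
    using le[of 0] by (auto simp: t_def power_le_one)
  have "cmod (deriv \<phi> 0 - \<mu> * \<phi> 0 ^ 2) \<le> cmod (deriv \<phi> 0) + cmod \<mu> * t"
    using norm_triangle_ineq4[of "deriv \<phi> 0" "\<mu> * \<phi> 0 ^ 2"] by (simp add: norm_mult norm_power t_def)
  also have "\<dots> \<le> (1 - t) * 1 + t * cmod \<mu>"
    using Schwarz_Pick_at_0[OF hol le] by (simp add: t_def)
  also have "\<dots> \<le> (1 - t) * max 1 (cmod \<mu>) + t * max 1 (cmod \<mu>)"
    using t by (intro add_mono mult_left_mono) auto
  finally show ?thesis
    by (simp add: algebra_simps)
qed

lemma classOmega_coefficients_Schwarz:
  assumes f: "f \<in> classOmega"
  obtains \<phi> where "\<phi> holomorphic_on ball 0 1" "\<And>z. z \<in> ball 0 1 \<Longrightarrow> cmod (\<phi> z) \<le> 1"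
    "tcoeff f 2 = \<phi> 0 / 2" "tcoeff f 3 = deriv \<phi> 0 / 4"
proof -
  have hol: "f holomorphic_on ball 0 1" and "f 0 = 0"
    and bound: "\<And>z. z \<in> ball 0 1 \<Longrightarrow> cmod (z * deriv f z - f z) < 1/2"
    using f by (auto simp: classOmega_def classA_def)
  define h where "h = (\<lambda>z. 2 * (z * deriv f z - f z))"
  have hol_g: "(\<lambda>z. z * deriv f z - f z) holomorphic_on ball 0 1"
    using hol holomorphic_deriv[OF hol] by (auto intro!: holomorphic_intros)
  then have holh: "h holomorphic_on ball 0 1"
    unfolding h_def by (rule holomorphic_on_mult[OF holomorphic_on_const])
  have tcoeff_h: "tcoeff h n = 2 * (of_nat n - 1) * tcoeff f n" for n
  proof -
    have "tcoeff h n = 2 * tcoeff (\<lambda>z. z * deriv f z - f z) n"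
      unfolding h_def by (rule tcoeff_cmult[OF _ _ hol_g]) auto
    also have "\<dots> = 2 * ((of_nat n - 1) * tcoeff f n)"
      using tcoeff_z_deriv_minus[OF _ _ hol] by simp
    finally show ?thesis by simp
  qed
  have "cmod (h z) < 1" if "z \<in> ball 0 1" for z
    using bound[OF that] unfolding h_def norm_mult by simp
  moreover have "h 0 = 0"
    using \<open>f 0 = 0\<close> by (simp add: h_def)
  moreover have "deriv h 0 = 0"
    using tcoeff_h[of 1] unfolding tcoeff_1 by simp
  ultimately obtain \<phi> where hol\<phi>: "\<phi> holomorphic_on ball 0 1"
    and le: "\<And>z. z \<in> ball 0 1 \<Longrightarrow> cmod (\<phi> z) \<le> 1" and h\<phi>: "\<And>z. z \<in> ball 0 1 \<Longrightarrow> h z = z ^ 2 * \<phi> z"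
    using Schwarz_factor_double_zero[OF holh] by metis
  have "eventually (\<lambda>z. h z = z ^ 2 * \<phi> z) (nhds 0)"
    using eventually_nhds_in_open[of "ball (0::complex) 1" 0] h\<phi> by (auto elim!: eventually_mono)
  then have "tcoeff h (n + 2) = tcoeff \<phi> n" for n
    using tcoeff_cong_ev tcoeff_mult_power[of "ball 0 1" \<phi> 2 n] hol\<phi> by simp
  from this[of 0] this[of 1] have "tcoeff h 2 = \<phi> 0" "tcoeff h 3 = deriv \<phi> 0"
    by (simp_all add: numeral_2_eq_2 numeral_3_eq_3 tcoeff_def)
  then have "tcoeff f 2 = \<phi> 0 / 2" "tcoeff f 3 = deriv \<phi> 0 / 4"
    using tcoeff_h[of 2] tcoeff_h[of 3] by (simp_all add: field_simps)
  with that hol\<phi> le show ?thesis by blast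
qed

lemma classOmega_Fekete_Szegoe_bound:
  assumes "f \<in> classOmega"
  shows "cmod (tcoeff f 3 - \<mu> * (tcoeff f 2)^2) \<le> (1/4) * max 1 (cmod \<mu>)"
proof -
  obtain \<phi> where hol: "\<phi> holomorphic_on ball 0 1" and le: "\<And>z. z \<in> ball 0 1 \<Longrightarrow> cmod (\<phi> z) \<le> 1"
    and a2: "tcoeff f 2 = \<phi> 0 / 2" and a3: "tcoeff f 3 = deriv \<phi> 0 / 4"
    using classOmega_coefficients_Schwarz[OF assms] by metis
  have "tcoeff f 3 - \<mu> * (tcoeff f 2)^2 = (deriv \<phi> 0 - \<mu> * \<phi> 0 ^ 2) / 4"
    by (simp add: a2 a3 field_simps power2_eq_square)
  then have "cmod (tcoeff f 3 - \<mu> * (tcoeff f 2)^2) = cmod (deriv \<phi> 0 - \<mu> * \<phi> 0 ^ 2) / 4"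
    by (simp only: norm_divide) simp
  then show ?thesis
    using Fekete_Szegoe_unit_disc_map[OF hol le, of \<mu>] by simp
qed

lemma tcoeff_id_plus_monomial:
  "tcoeff (\<lambda>z. z + c * z ^ k) n = (if n = 1 then 1 else 0) + (if n = k then c else 0)"
proof -
  have "tcoeff (\<lambda>z. z + c * z ^ k) n = tcoeff (\<lambda>z. z) n + c * tcoeff (\<lambda>z. z ^ k) n"
    by (simp add: tcoeff_add[of UNIV] tcoeff_cmult[of UNIV] holomorphic_intros)
  moreover have "tcoeff (\<lambda>z. z) n = (if n = 1 then 1 else 0)"
    using tcoeff_power[of 1 n] by simp
  ultimately show ?thesis
    by (simp add: tcoeff_power)
qed

lemma id_plus_monomial_in_classOmega:
  assumes k: "k \<ge> 2" and c: "(real k - 1) * cmod c \<le> 1/2"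
  shows "(\<lambda>z. z + c * z ^ k) \<in> classOmega"
proof -
  have d: "deriv (\<lambda>z. z + c * z ^ k) z = 1 + c * of_nat k * z ^ (k - 1)" for z :: complex
    by (rule DERIV_imp_deriv) (auto intro!: derivative_eq_intros)
  have "cmod (z * deriv (\<lambda>z. z + c * z ^ k) z - (z + c * z ^ k)) < 1/2" if "z \<in> ball 0 1" for z :: complex
  proof -
    have "z * deriv (\<lambda>z. z + c * z ^ k) z - (z + c * z ^ k) = of_nat (k - 1) * c * z ^ k"
      unfolding d using k by (cases k) (simp_all add: algebra_simps)
    then have "cmod (z * deriv (\<lambda>z. z + c * z ^ k) z - (z + c * z ^ k)) = real (k - 1) * cmod c * cmod z ^ k"
      by (simp only: norm_mult norm_power norm_of_nat)
    also have "\<dots> \<le> 1/2 * cmod z ^ k"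
      using c k by (intro mult_right_mono) (simp_all add: of_nat_diff)
    also have "\<dots> < 1/2"
      using that k by (simp add: power_less_one_iff)
    finally show ?thesis .
  qed
  moreover have "deriv (\<lambda>z. z + c * z ^ k) 0 = 1"
    using k by (simp add: d)
  moreover have "(\<lambda>z. z + c * z ^ k) holomorphic_on ball 0 1"
    by (intro holomorphic_intros)
  ultimately show ?thesis
    unfolding classOmega_def classA_def using k by simp
qed

lemma classOmega_Fekete_Szegoe_sharp:
  "\<exists>f \<in> classOmega. cmod (tcoeff f 3 - \<mu> * (tcoeff f 2)^2) = (1/4) * max 1 (cmod \<mu>)"
proof (cases "cmod \<mu> \<le> 1")
  case True
  have "cmod (tcoeff (\<lambda>z. z + 1/4 * z ^ 3) 3 - \<mu> * (tcoeff (\<lambda>z. z + 1/4 * z ^ 3) 2)^2)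
      = (1/4) * max 1 (cmod \<mu>)"
    using True by (simp only: tcoeff_id_plus_monomial) (simp add: max_def)
  moreover have "(\<lambda>z. z + 1/4 * z ^ 3) \<in> classOmega"
    by (rule id_plus_monomial_in_classOmega) simp_all
  ultimately show ?thesis by blast
next
  case False
  have "cmod (tcoeff (\<lambda>z. z + 1/2 * z ^ 2) 3 - \<mu> * (tcoeff (\<lambda>z. z + 1/2 * z ^ 2) 2)^2)
      = (1/4) * max 1 (cmod \<mu>)"
    using False by (simp only: tcoeff_id_plus_monomial) (simp add: max_def norm_mult norm_power power2_eq_square)
  moreover have "(\<lambda>z. z + 1/2 * z ^ 2) \<in> classOmega"
    by (rule id_plus_monomial_in_classOmega) simp_all
  ultimately show ?thesis by blast
qed

theorem theorem6p2:
  shows "(\<forall>f \<in> classOmega. \<forall>\<mu>::complex.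
            cmod (tcoeff f 3 - \<mu> * (tcoeff f 2)^2) \<le> (1/4) * max 1 (cmod \<mu>))
       \<and> (\<forall>\<mu>::complex. \<exists>f \<in> classOmega.
            cmod (tcoeff f 3 - \<mu> * (tcoeff f 2)^2) = (1/4) * max 1 (cmod \<mu>))"
  using classOmega_Fekete_Szegoe_bound classOmega_Fekete_Szegoe_sharp by blast

end
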